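(* Let $H_{ij}$, $i=1,\ldots,b$, $j=1,\ldots,s_i$, be $n=\sum_i s_i$ null hypotheses with $p$-values $P_{ij}$, where true-null $p$-values are $U(0,1)$, the rows $(P_{i1},\ldots,P_{is_i})$ are mutually independent across $i$, and within each row $i$, for every true-null $P_{ij}$ and every coordinatewise non-decreasing $\phi_i$, $E\{\phi_i(P_{i1},\ldots,P_{is_i})\mid P_{ij}\le u\}$ is non-decreasing in $u\in(0,1)$. Fix $\alpha\in(0,1)$ and $\lambda$ with $(2b+3)^{-2/(b+2)}\le\lambda<1$, and let $\widehat n_0=(n-R(\lambda)+s_{\max})/(1-\lambda)$, where $s_{\max}=\max_is_i$ and $R(\lambda)=\#\{(i,j):P_{ij}\le\lambda\}$. Apply the adaptive BH method: $\widehat\pi_0=\widehat n_0/n$, $Q_{ij}=\widehat\pi_0P_{ij}$; $\tilde P_i=(n/b)\min_jP_{ij}$ ordered as $\tilde P_{(1)}\le\cdots\le\tilde P_{(b)}$, $\tilde Q_i=\widehat\pi_0\tilde P_i$, $\tilde Q_{(i)}=\widehat\pi_0\tilde P_{(i)}$; $B^*=\max\{1\le i\le b:\tilde Q_{(i)}\le i\alpha/b\}$; if it exists, reject $H_{ij}$ for all $(i,j)$ with $\tilde Q_i\le\tilde Q_{(B^* )}$ and $Q_{ij}\le B^*\alpha/n$, otherwise reject nothing. Then for every configuration of true and false nulls, the false discovery rate of this method is at most $\alpha$.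
   Context: FDR $=E(V/\max\{R,1\})$, where $V$ is the number of rejected true null hypotheses and $R$ the total number of rejections. *)

theory Defs
  imports "HOL-Probability.Probability"
begin

text \<open>Hypotheses are indexed by pairs (i,j) with i < b, j < s i (0-based).
  A realisation of the p-values is a function p :: nat => nat => real.\<close>

definition idx :: "nat \<Rightarrow> (nat \<Rightarrow> nat) \<Rightarrow> (nat \<times> nat) set" where
  "idx b s = {(i,j). i < b \<and> j < s i}"

definition ntot :: "nat \<Rightarrow> (nat \<Rightarrow> nat) \<Rightarrow> nat" where
  "ntot b s = (\<Sum>i<b. s i)"

definition smax :: "nat \<Rightarrow> (nat \<Rightarrow> nat) \<Rightarrow> nat" where
  "smax b s = Max (s ` {..<b})"

definition Rlam :: "nat \<Rightarrow> (nat \<Rightarrow> nat) \<Rightarrow> real \<Rightarrow> (nat \<Rightarrow> nat \<Rightarrow> real) \<Rightarrow> nat" where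
  "Rlam b s lam p = card {(i,j) \<in> idx b s. p i j \<le> lam}"

definition n0hat :: "nat \<Rightarrow> (nat \<Rightarrow> nat) \<Rightarrow> real \<Rightarrow> (nat \<Rightarrow> nat \<Rightarrow> real) \<Rightarrow> real" where
  "n0hat b s lam p =
     (real (ntot b s) - real (Rlam b s lam p) + real (smax b s)) / (1 - lam)"

definition pi0hat :: "nat \<Rightarrow> (nat \<Rightarrow> nat) \<Rightarrow> real \<Rightarrow> (nat \<Rightarrow> nat \<Rightarrow> real) \<Rightarrow> real" where
  "pi0hat b s lam p = n0hat b s lam p / real (ntot b s)"

definition Qv :: "nat \<Rightarrow> (nat \<Rightarrow> nat) \<Rightarrow> real \<Rightarrow> (nat \<Rightarrow> nat \<Rightarrow> real) \<Rightarrow> nat \<Rightarrow> nat \<Rightarrow> real" where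
  "Qv b s lam p i j = pi0hat b s lam p * p i j"

definition Ptil :: "nat \<Rightarrow> (nat \<Rightarrow> nat) \<Rightarrow> (nat \<Rightarrow> nat \<Rightarrow> real) \<Rightarrow> nat \<Rightarrow> real" where
  "Ptil b s p i = (real (ntot b s) / real b) * Min {p i j | j. j < s i}"

definition Ptil_ord :: "nat \<Rightarrow> (nat \<Rightarrow> nat) \<Rightarrow> (nat \<Rightarrow> nat \<Rightarrow> real) \<Rightarrow> nat \<Rightarrow> real" where
  "Ptil_ord b s p k = sort (map (Ptil b s p) [0..<b]) ! (k - 1)"

definition Qtil :: "nat \<Rightarrow> (nat \<Rightarrow> nat) \<Rightarrow> real \<Rightarrow> (nat \<Rightarrow> nat \<Rightarrow> real) \<Rightarrow> nat \<Rightarrow> real" where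
  "Qtil b s lam p i = pi0hat b s lam p * Ptil b s p i"

definition Qtil_ord :: "nat \<Rightarrow> (nat \<Rightarrow> nat) \<Rightarrow> real \<Rightarrow> (nat \<Rightarrow> nat \<Rightarrow> real) \<Rightarrow> nat \<Rightarrow> real" where
  "Qtil_ord b s lam p k = pi0hat b s lam p * Ptil_ord b s p k"

definition Bset :: "nat \<Rightarrow> (nat \<Rightarrow> nat) \<Rightarrow> real \<Rightarrow> real \<Rightarrow> (nat \<Rightarrow> nat \<Rightarrow> real) \<Rightarrow> nat set" where
  "Bset b s alpha lam p = {k \<in> {1..b}. Qtil_ord b s lam p k \<le> real k * alpha / real b}"

definition rejections :: "nat \<Rightarrow> (nat \<Rightarrow> nat) \<Rightarrow> real \<Rightarrow> real \<Rightarrow> (nat \<Rightarrow> nat \<Rightarrow> real) \<Rightarrow> (nat \<times> nat) set" where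
  "rejections b s alpha lam p =
     (if Bset b s alpha lam p = {} then {}
      else (let B = Max (Bset b s alpha lam p) in
        {(i,j) \<in> idx b s. Qtil b s lam p i \<le> Qtil_ord b s lam p B
                         \<and> Qv b s lam p i j \<le> real B * alpha / real (ntot b s)}))"

text \<open>False discovery proportion V / max(R,1), N0 = set of true nulls.\<close>
definition fdp :: "(nat \<times> nat) set \<Rightarrow> (nat \<times> nat) set \<Rightarrow> real" where
  "fdp N0 Rej = real (card (Rej \<inter> N0)) / real (max (card Rej) 1)"

definition row :: "(nat \<Rightarrow> nat) \<Rightarrow> ('w \<Rightarrow> nat \<Rightarrow> nat \<Rightarrow> real) \<Rightarrow> nat \<Rightarrow> 'w \<Rightarrow> (nat \<Rightarrow> real)" where
  "row s P i \<omega> = restrict (\<lambda>j. P \<omega> i j) {..<s i}"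

end

theory Submission
  imports Defs
begin

text \<open>Let D_i be the number of p-values above \<lambda> outside row i. The s_max correction gives
  \<pi>0hat \<ge> (D_i + s_max) / ((1 - \<lambda>) n), so a rejected (i,j) satisfies P_ij \<le> c_i B* with
  c_i = \<alpha> (1 - \<lambda>) / (D_i + s_max), a level that does not depend on row i. Since B* \<le> R,
  the FDP is at most the sum over true nulls (i,j) of T_ij = \<Sum>_k 1{B* = k, P_ij \<le> c_i k} / k.
  Conditionally on the other rows, B* is a non-increasing function of row i, so positive
  dependence within the row makes P(B* \<le> m, P_ij \<le> u) / u non-decreasing in u, and a
  telescoping sum bounds the conditional mean of T_ij by
  c_i = \<alpha> E[1{P_ij > \<lambda>} / (D_i + s_max) | other rows]. These weights sum to at most one
  over the true nulls, so Fubini over the independent rows gives E[FDP] \<le> \<alpha>.\<close>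

section \<open>Order statistics\<close>

lemma sorted_map_nth_le_iff_card:
  fixes f :: "nat \<Rightarrow> 'a :: linorder"
  assumes "1 \<le> k" "k \<le> b"
  shows "sort (map f [0..<b]) ! (k - 1) \<le> v \<longleftrightarrow> k \<le> card {i. i < b \<and> f i \<le> v}"
proof -
  let ?L = "sort (map f [0..<b])"
  have "{i. i < b \<and> map f [0..<b] ! i \<le> v} = {i. i < b \<and> f i \<le> v}" by auto
  then have "card {i. i < b \<and> f i \<le> v} = length (filter (\<lambda>x. x \<le> v) (map f [0..<b]))"
    by (simp add: length_filter_conv_card)
  also have "\<dots> = length (filter (\<lambda>x. x \<le> v) ?L)"
    by (metis mset_filter mset_sort size_mset)
  also have "\<dots> = card {m. m < b \<and> ?L ! m \<le> v}"
    by (simp add: length_filter_conv_card)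
  finally have card_eq: "card {i. i < b \<and> f i \<le> v} = card {m. m < b \<and> ?L ! m \<le> v}" .
  have nth_mono: "m \<le> m' \<Longrightarrow> m' < b \<Longrightarrow> ?L ! m \<le> ?L ! m'" for m m'
    by (simp add: sorted_nth_mono)
  show ?thesis
  proof
    assume kth_le: "?L ! (k - 1) \<le> v"
    have "{..<k} \<subseteq> {m. m < b \<and> ?L ! m \<le> v}"
    proof
      fix m assume "m \<in> {..<k}"
      then have "m < b" "?L ! m \<le> ?L ! (k - 1)" using assms nth_mono[of m "k - 1"] by auto
      then show "m \<in> {m. m < b \<and> ?L ! m \<le> v}" using kth_le by simp
    qed
    then show "k \<le> card {i. i < b \<and> f i \<le> v}"
      using card_mono[of "{m. m < b \<and> ?L ! m \<le> v}" "{..<k}"] card_eq by simp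
  next
    assume k_le: "k \<le> card {i. i < b \<and> f i \<le> v}"
    show "?L ! (k - 1) \<le> v"
    proof (rule ccontr)
      assume kth_gt: "\<not> ?L ! (k - 1) \<le> v"
      have "{m. m < b \<and> ?L ! m \<le> v} \<subseteq> {..<k - 1}"
      proof
        fix m assume m: "m \<in> {m. m < b \<and> ?L ! m \<le> v}"
        show "m \<in> {..<k - 1}"
        proof (rule ccontr)
          assume "m \<notin> {..<k - 1}"
          then have "?L ! (k - 1) \<le> ?L ! m" using m nth_mono[of "k - 1" m] by auto
          then show False using m kth_gt by auto
        qed
      qed
      then have "card {m. m < b \<and> ?L ! m \<le> v} \<le> k - 1"
        by (metis card_lessThan card_mono finite_lessThan)
      then show False using k_le card_eq assms by simp
    qed
  qed
qed

section \<open>The step-up procedure for fixed p-values\<close>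

text \<open>In the notation of the proof idea, bstar is B* (0 if no k qualifies), n_above_off_row is D_i,
  row_level is c_i, fdp_term is T_ij and above_weight is 1{P_ij > \<lambda>} / (D_i + s_max).\<close>

definition bstar :: "nat \<Rightarrow> (nat \<Rightarrow> nat) \<Rightarrow> real \<Rightarrow> real \<Rightarrow> (nat \<Rightarrow> nat \<Rightarrow> real) \<Rightarrow> nat" where
  "bstar b s alpha lam p =
     (if Bset b s alpha lam p = {} then 0 else Max (Bset b s alpha lam p))"

definition n_above :: "nat \<Rightarrow> (nat \<Rightarrow> nat) \<Rightarrow> real \<Rightarrow> (nat \<Rightarrow> nat \<Rightarrow> real) \<Rightarrow> nat" where
  "n_above b s lam p = card {(k,j) \<in> idx b s. lam < p k j}"

definition n_above_off_row ::
    "nat \<Rightarrow> (nat \<Rightarrow> nat) \<Rightarrow> real \<Rightarrow> (nat \<Rightarrow> nat \<Rightarrow> real) \<Rightarrow> nat \<Rightarrow> nat" where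
  "n_above_off_row b s lam p i = card {(k,j) \<in> idx b s. k \<noteq> i \<and> lam < p k j}"

definition row_level :: "nat \<Rightarrow> (nat \<Rightarrow> nat) \<Rightarrow> real \<Rightarrow> real \<Rightarrow> (nat \<Rightarrow> nat \<Rightarrow> real) \<Rightarrow> nat \<Rightarrow> real" where
  "row_level b s alpha lam p i =
     alpha * (1 - lam) / (real (n_above_off_row b s lam p i) + real (smax b s))"

definition fdp_term ::
    "nat \<Rightarrow> (nat \<Rightarrow> nat) \<Rightarrow> real \<Rightarrow> real \<Rightarrow> (nat \<Rightarrow> nat \<Rightarrow> real) \<Rightarrow> nat \<Rightarrow> nat \<Rightarrow> real" where
  "fdp_term b s alpha lam p i j =
     (\<Sum>k\<in>{1..b}. if bstar b s alpha lam p = k \<and> p i j \<le> row_level b s alpha lam p i * real k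
                  then 1 / real k else 0)"

definition above_weight ::
    "nat \<Rightarrow> (nat \<Rightarrow> nat) \<Rightarrow> real \<Rightarrow> (nat \<Rightarrow> nat \<Rightarrow> real) \<Rightarrow> nat \<Rightarrow> nat \<Rightarrow> real" where
  "above_weight b s lam p i j =
     (if lam < p i j then 1 else 0) / (real (n_above_off_row b s lam p i) + real (smax b s))"

lemma idx_Sigma: "idx b s = Sigma {..<b} (\<lambda>i. {..<s i})"
  by (auto simp: idx_def)

lemma finite_idx [simp]: "finite (idx b s)"
  by (simp add: idx_Sigma)

lemma finite_idx_filter [simp]: "finite {(k, j). (k, j) \<in> idx b s \<and> Q k j}"
  by (rule finite_subset[of _ "idx b s"]) auto

lemma card_idx: "card (idx b s) = ntot b s"
  by (simp add: idx_Sigma ntot_def card_SigmaI)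

lemma Rlam_add_n_above: "Rlam b s lam p + n_above b s lam p = ntot b s"
proof -
  have "Rlam b s lam p + n_above b s lam p
      = card ({(i,j) \<in> idx b s. p i j \<le> lam} \<union> {(k,j) \<in> idx b s. lam < p k j})"
    unfolding Rlam_def n_above_def by (subst card_Un_disjoint) auto
  also have "{(i,j) \<in> idx b s. p i j \<le> lam} \<union> {(k,j) \<in> idx b s. lam < p k j} = idx b s"
    by auto
  finally show ?thesis by (simp add: card_idx)
qed

lemma n_above_off_row_le: "n_above_off_row b s lam p i \<le> n_above b s lam p"
  unfolding n_above_off_row_def n_above_def by (intro card_mono) auto

lemma n_above_off_row_upd [simp]: "n_above_off_row b s lam (p(i := z)) i = n_above_off_row b s lam p i"
  unfolding n_above_off_row_def by (rule arg_cong[where f=card]) auto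

lemma row_level_upd [simp]: "row_level b s alpha lam (p(i := z)) i = row_level b s alpha lam p i"
  by (simp add: row_level_def)

lemma n_above_off_row_cong:
  "\<forall>(k,j)\<in>idx b s. p k j = p' k j \<Longrightarrow> n_above_off_row b s lam p' i = n_above_off_row b s lam p i"
  unfolding n_above_off_row_def by (rule arg_cong[where f=card]) auto

lemma fdp_term_nonneg: "0 \<le> fdp_term b s alpha lam p i j"
  unfolding fdp_term_def by (intro sum_nonneg) auto

lemma abs_fdp_term_le: "\<bar>fdp_term b s alpha lam p i j\<bar> \<le> real b"
proof -
  have "fdp_term b s alpha lam p i j \<le> (\<Sum>k\<in>{1..b}. (1::real))"
    unfolding fdp_term_def by (intro sum_mono) auto
  then show ?thesis using fdp_term_nonneg[of b s alpha lam p i j] by simp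
qed

lemma fdp_term_ge:
  assumes "1 \<le> k" "k \<le> b" "bstar b s alpha lam p = k"
    and "p i j \<le> row_level b s alpha lam p i * real k"
  shows "1 / real k \<le> fdp_term b s alpha lam p i j"
  using member_le_sum[of k "{1..b}"
      "\<lambda>k. if bstar b s alpha lam p = k \<and> p i j \<le> row_level b s alpha lam p i * real k
           then 1 / real k else 0"] assms
  unfolding fdp_term_def by simp

lemma Bset_subset: "Bset b s alpha lam p \<subseteq> {1..b}"
  unfolding Bset_def by auto

lemma finite_Bset [simp]: "finite (Bset b s alpha lam p)"
  using Bset_subset by (rule finite_subset) simp

lemma bstar_in_Bset: "Bset b s alpha lam p \<noteq> {} \<Longrightarrow> bstar b s alpha lam p \<in> Bset b s alpha lam p"
  by (simp add: bstar_def)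

lemma bstar_eq_iff:
  "bstar b s alpha lam p = a \<longleftrightarrow>
    (a = 0 \<and> (\<forall>m\<in>{1..b}. m \<notin> Bset b s alpha lam p)) \<or>
    (a \<in> Bset b s alpha lam p \<and> (\<forall>m\<in>{a<..b}. m \<notin> Bset b s alpha lam p))"
  (is "_ \<longleftrightarrow> ?rhs")
proof (cases "Bset b s alpha lam p = {}")
  case True
  then show ?thesis by (auto simp: bstar_def)
next
  case False
  let ?S = "Bset b s alpha lam p"
  have Max_S: "Max ?S \<in> ?S" using False by simp
  show ?thesis
  proof
    assume "bstar b s alpha lam p = a"
    then show ?rhs using False Max_S Bset_subset[of b s alpha lam p]
      by (auto simp: bstar_def dest: Max_ge[OF finite_Bset])
  next
    assume ?rhs
    then have a: "a \<in> ?S" and above: "\<forall>m\<in>{a<..b}. m \<notin> ?S"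
      using Max_S Bset_subset[of b s alpha lam p] by auto
    have "Max ?S \<le> a"
    proof (rule ccontr)
      assume "\<not> Max ?S \<le> a"
      then have "Max ?S \<in> {a<..b}" using Max_S Bset_subset[of b s alpha lam p] by auto
      then show False using above Max_S by blast
    qed
    then show "bstar b s alpha lam p = a"
      using a False by (simp add: bstar_def antisym)
  qed
qed

lemma fdp_term_cong:
  assumes "\<forall>(k,j)\<in>idx b s. p k j = p' k j" and "(i,j) \<in> idx b s"
    and "bstar b s alpha lam p' = bstar b s alpha lam p"
  shows "fdp_term b s alpha lam p' i j = fdp_term b s alpha lam p i j"
  using assms n_above_off_row_cong[OF assms(1)] by (auto simp: fdp_term_def row_level_def)

context
  fixes b :: nat and s :: "nat \<Rightarrow> nat"
  assumes b_pos: "1 \<le> b" and s_pos: "\<forall>i<b. 1 \<le> s i"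
begin

lemma ntot_pos: "1 \<le> ntot b s"
proof -
  have "s 0 \<le> ntot b s"
    unfolding ntot_def using b_pos by (intro member_le_sum) auto
  then show ?thesis using s_pos b_pos by fastforce
qed

lemma le_smax: "i < b \<Longrightarrow> s i \<le> smax b s"
  unfolding smax_def by (intro Max_ge) auto

lemma smax_pos: "1 \<le> smax b s"
  using le_smax[of 0] s_pos b_pos by fastforce

lemma n_above_le_off_row: "i < b \<Longrightarrow> n_above b s lam p \<le> n_above_off_row b s lam p i + smax b s"
proof -
  assume i: "i < b"
  have "{(k,j) \<in> idx b s. lam < p k j}
      \<subseteq> {(k,j) \<in> idx b s. k \<noteq> i \<and> lam < p k j} \<union> ({i} \<times> {..<s i})"
    by (auto simp: idx_def)
  then have "n_above b s lam p
      \<le> card ({(k,j) \<in> idx b s. k \<noteq> i \<and> lam < p k j} \<union> ({i} \<times> {..<s i}))"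
    unfolding n_above_def by (intro card_mono) auto
  also have "\<dots> \<le> n_above_off_row b s lam p i + s i"
    unfolding n_above_off_row_def by (rule order_trans[OF card_Un_le]) simp
  finally show ?thesis using le_smax[OF i] by simp
qed

lemma pi0hat_eq:
  "lam < 1 \<Longrightarrow>
   pi0hat b s lam p = (real (n_above b s lam p) + real (smax b s)) / ((1 - lam) * real (ntot b s))"
  using Rlam_add_n_above[of b s lam p]
  by (simp add: pi0hat_def n0hat_def field_simps of_nat_diff flip: of_nat_add)

lemma pi0hat_pos: "lam < 1 \<Longrightarrow> 0 < pi0hat b s lam p"
  using pi0hat_eq smax_pos ntot_pos by (auto intro!: divide_pos_pos)

lemma pi0hat_ge_off_row:
  assumes "lam < 1" "i < b"
  shows "(real (n_above_off_row b s lam p i) + real (smax b s)) / ((1 - lam) * real (ntot b s))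
         \<le> pi0hat b s lam p"
  unfolding pi0hat_eq[OF assms(1)] using n_above_off_row_le[of b s lam p i] ntot_pos assms
  by (intro divide_right_mono) auto

lemma mem_Bset_iff_card:
  assumes "lam < 1"
  shows "m \<in> Bset b s alpha lam p \<longleftrightarrow> 1 \<le> m \<and> m \<le> b \<and>
     m \<le> card {i. i < b \<and> Ptil b s p i \<le> real m * alpha / real b / pi0hat b s lam p}"
proof -
  have pos: "0 < pi0hat b s lam p" using pi0hat_pos assms .
  have "pi0hat b s lam p * X \<le> real m * alpha / real b \<longleftrightarrow>
        X \<le> real m * alpha / real b / pi0hat b s lam p" for X
    using pos by (simp only: pos_le_divide_eq[OF pos] mult.commute)
  then show ?thesis
    unfolding Bset_def Qtil_ord_def Ptil_ord_def
    using sorted_map_nth_le_iff_card[of m b "Ptil b s p"] by auto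
qed

lemma row_min_attained: "i < b \<Longrightarrow> \<exists>j<s i. p i j = Min {p i j | j. j < s i}"
proof -
  assume i: "i < b"
  have "{p i j | j. j < s i} = (\<lambda>j. p i j) ` {..<s i}" by auto
  moreover have "0 \<in> {..<s i}" using s_pos i by (auto simp: Suc_le_eq)
  then have "Min ((\<lambda>j. p i j) ` {..<s i}) \<in> (\<lambda>j. p i j) ` {..<s i}"
    by (intro Min_in) auto
  ultimately show ?thesis by auto
qed

lemma Ptil_mono:
  assumes i: "i < b" and le: "\<forall>j<s i. p i j \<le> p' i j"
  shows "Ptil b s p i \<le> Ptil b s p' i"
proof -
  obtain j0 where j0: "j0 < s i" "p' i j0 = Min {p' i j | j. j < s i}"
    using row_min_attained[OF i, of p'] by blast
  have "Min {p i j | j. j < s i} \<le> p i j0"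
    using j0 by (intro Min_le) auto
  also have "\<dots> \<le> Min {p' i j | j. j < s i}" using le j0 by auto
  finally show ?thesis unfolding Ptil_def by (intro mult_left_mono) auto
qed

text \<open>Larger p-values mean fewer small p-values and a larger \<pi>0hat, hence fewer candidates for B*.\<close>

lemma Bset_antimono:
  assumes lam: "lam < 1" and alpha: "0 \<le> alpha"
    and le: "\<forall>(k,j)\<in>idx b s. p k j \<le> p' k j"
  shows "Bset b s alpha lam p' \<subseteq> Bset b s alpha lam p"
proof
  fix m assume m: "m \<in> Bset b s alpha lam p'"
  have "Rlam b s lam p' \<le> Rlam b s lam p"
    unfolding Rlam_def using le by (intro card_mono) auto
  then have "n_above b s lam p \<le> n_above b s lam p'"
    using Rlam_add_n_above[of b s lam p] Rlam_add_n_above[of b s lam p'] by linarith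
  then have pi_le: "pi0hat b s lam p \<le> pi0hat b s lam p'"
    unfolding pi0hat_eq[OF lam] using lam ntot_pos by (intro divide_right_mono) auto
  let ?c = "real m * alpha / real b"
  have thr: "?c / pi0hat b s lam p' \<le> ?c / pi0hat b s lam p"
    using alpha pi_le pi0hat_pos[OF lam] by (intro divide_left_mono) auto
  have "{i. i < b \<and> Ptil b s p' i \<le> ?c / pi0hat b s lam p'}
      \<subseteq> {i. i < b \<and> Ptil b s p i \<le> ?c / pi0hat b s lam p}"
  proof safe
    fix i assume i: "i < b" and le_thr: "Ptil b s p' i \<le> ?c / pi0hat b s lam p'"
    have "Ptil b s p i \<le> Ptil b s p' i" using le i by (intro Ptil_mono) (auto simp: idx_def)
    then show "Ptil b s p i \<le> ?c / pi0hat b s lam p" using le_thr thr by linarith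
  qed
  then have "card {i. i < b \<and> Ptil b s p' i \<le> ?c / pi0hat b s lam p'}
      \<le> card {i. i < b \<and> Ptil b s p i \<le> ?c / pi0hat b s lam p}"
    by (intro card_mono) auto
  then show "m \<in> Bset b s alpha lam p"
    using m unfolding mem_Bset_iff_card[OF lam] by auto
qed

lemma bstar_antimono:
  assumes "lam < 1" "0 \<le> alpha" "\<forall>(k,j)\<in>idx b s. p k j \<le> p' k j"
  shows "bstar b s alpha lam p' \<le> bstar b s alpha lam p"
  using Bset_antimono[OF assms] unfolding bstar_def by (auto intro!: Max_mono)

lemma bstar_cong:
  assumes "lam < 1" "0 \<le> alpha" "\<forall>(k,j)\<in>idx b s. p k j = p' k j"
  shows "bstar b s alpha lam p' = bstar b s alpha lam p"
  using assms by (intro antisym bstar_antimono) auto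

lemma rejections_eq:
  "Bset b s alpha lam p \<noteq> {} \<Longrightarrow> rejections b s alpha lam p =
     {(i,j) \<in> idx b s. Qtil b s lam p i \<le> Qtil_ord b s lam p (bstar b s alpha lam p)
        \<and> Qv b s lam p i j \<le> real (bstar b s alpha lam p) * alpha / real (ntot b s)}"
  by (simp add: rejections_def bstar_def Let_def)

lemma rejections_subset_idx: "rejections b s alpha lam p \<subseteq> idx b s"
  by (auto simp: rejections_def Let_def)

lemma rejected_le_row_level:
  assumes lam: "lam < 1" and alpha: "0 < alpha" and nonempty: "Bset b s alpha lam p \<noteq> {}"
    and rej: "(i,j) \<in> rejections b s alpha lam p"
  shows "p i j \<le> row_level b s alpha lam p i * real (bstar b s alpha lam p)"
proof -
  let ?B = "real (bstar b s alpha lam p)" and ?n = "real (ntot b s)"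
  let ?D = "real (n_above_off_row b s lam p i) + real (smax b s)"
  have i: "i < b" and Q: "pi0hat b s lam p * p i j \<le> ?B * alpha / ?n"
    using rej unfolding rejections_eq[OF nonempty] by (auto simp: idx_def Qv_def)
  have D: "0 < ?D" using smax_pos by auto
  have n: "0 < ?n" using ntot_pos by auto
  show ?thesis
  proof (cases "p i j \<le> 0")
    case True
    have "0 \<le> row_level b s alpha lam p i * ?B"
      using alpha lam D by (simp add: row_level_def)
    then show ?thesis using True by linarith
  next
    case False
    have "?D / ((1 - lam) * ?n) * p i j \<le> pi0hat b s lam p * p i j"
      using pi0hat_ge_off_row[OF lam i, of p] False by (intro mult_right_mono) auto
    also have "\<dots> \<le> ?B * alpha / ?n" by (rule Q)
    finally have "?D / ((1 - lam) * ?n) * p i j \<le> ?B * alpha / ?n" .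
    then have "?D * p i j / ((1 - lam) * ?n) \<le> ?B * alpha / ?n" by simp
    then have "?D * p i j \<le> ?B * alpha / ?n * ((1 - lam) * ?n)"
      using n lam by (simp add: pos_divide_le_eq)
    then have "?D * p i j \<le> ?B * alpha * (1 - lam)" using n by simp
    then show ?thesis
      using D by (simp add: row_level_def field_simps)
  qed
qed

text \<open>Every block with Ptil_i \<le> Ptil_(B*) rejects its smallest p-value.\<close>

lemma bstar_le_card_rejections:
  assumes lam: "lam < 1" and nonempty: "Bset b s alpha lam p \<noteq> {}"
  shows "bstar b s alpha lam p \<le> card (rejections b s alpha lam p)"
proof -
  let ?B = "bstar b s alpha lam p" and ?pi = "pi0hat b s lam p" and ?n = "real (ntot b s)"
  have B: "?B \<in> Bset b s alpha lam p" using bstar_in_Bset[OF nonempty] .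
  then have B_range: "1 \<le> ?B" "?B \<le> b" and B_crit: "?pi * Ptil_ord b s p ?B \<le> real ?B * alpha / real b"
    by (auto simp: Bset_def Qtil_ord_def)
  define G where "G = {i. i < b \<and> Ptil b s p i \<le> Ptil_ord b s p ?B}"
  have card_G: "?B \<le> card G"
    unfolding G_def
    using sorted_map_nth_le_iff_card[OF B_range, where f="Ptil b s p" and v="Ptil_ord b s p ?B"]
    by (simp add: Ptil_ord_def)
  define jmin where "jmin i = (SOME j. j < s i \<and> p i j = Min {p i j | j. j < s i})" for i
  have jmin: "jmin i < s i \<and> p i (jmin i) = Min {p i j | j. j < s i}" if "i < b" for i
    unfolding jmin_def using row_min_attained[OF that, of p] by (rule someI_ex)
  have "(\<lambda>i. (i, jmin i)) ` G \<subseteq> rejections b s alpha lam p"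
  proof
    fix q assume "q \<in> (\<lambda>i. (i, jmin i)) ` G"
    then obtain i where i: "i < b" "Ptil b s p i \<le> Ptil_ord b s p ?B" and q: "q = (i, jmin i)"
      by (auto simp: G_def)
    have Qtil_le: "Qtil b s lam p i \<le> Qtil_ord b s lam p ?B"
      unfolding Qtil_def Qtil_ord_def using i less_imp_le[OF pi0hat_pos[OF lam]] by (intro mult_left_mono) auto
    then have "?pi * (?n / real b * p i (jmin i)) \<le> real ?B * alpha / real b"
      using B_crit jmin[OF i(1)] by (simp add: Qtil_def Qtil_ord_def Ptil_def)
    then have "Qv b s lam p i (jmin i) \<le> real ?B * alpha / ?n"
      using ntot_pos b_pos by (simp add: Qv_def field_simps)
    then show "q \<in> rejections b s alpha lam p"
      using Qtil_le jmin[OF i(1)] i q unfolding rejections_eq[OF nonempty] by (simp add: idx_def)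
  qed
  moreover have "inj_on (\<lambda>i. (i, jmin i)) G" by (auto intro: inj_onI)
  ultimately have "card G \<le> card (rejections b s alpha lam p)"
    using finite_subset[OF rejections_subset_idx finite_idx] by (intro card_inj_on_le)
  then show ?thesis using card_G by simp
qed

lemma fdp_le_sum_fdp_term:
  assumes lam: "lam < 1" and alpha: "0 < alpha" and N0: "N0 \<subseteq> idx b s"
  shows "fdp N0 (rejections b s alpha lam p) \<le> (\<Sum>q\<in>N0. fdp_term b s alpha lam p (fst q) (snd q))"
proof (cases "Bset b s alpha lam p = {}")
  case True
  then show ?thesis by (simp add: rejections_def fdp_def sum_nonneg fdp_term_nonneg)
next
  case False
  let ?B = "bstar b s alpha lam p" and ?R = "rejections b s alpha lam p"
  have fin: "finite N0" using N0 by (rule finite_subset) simp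
  have B_pos: "1 \<le> ?B" and B_le: "?B \<le> b"
    using bstar_in_Bset[OF False] by (auto simp: Bset_def)
  have "fdp N0 ?R \<le> real (card (?R \<inter> N0)) / real ?B"
    unfolding fdp_def using B_pos bstar_le_card_rejections[OF lam False]
    by (intro divide_left_mono) auto
  also have "\<dots> = (\<Sum>q\<in>N0. if q \<in> ?R then 1 / real ?B else 0)"
    using fin by (simp add: sum.If_cases Int_commute)
  also have "\<dots> \<le> (\<Sum>q\<in>N0. fdp_term b s alpha lam p (fst q) (snd q))"
    using fdp_term_ge[OF B_pos B_le refl] rejected_le_row_level[OF lam alpha False]
    by (intro sum_mono) (auto simp: fdp_term_nonneg)
  finally show ?thesis .
qed

lemma abs_above_weight_le: "\<bar>above_weight b s lam p i j\<bar> \<le> 1"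
  using smax_pos by (simp add: above_weight_def)

lemma sum_above_weight_le_1:
  assumes N0: "N0 \<subseteq> idx b s"
  shows "(\<Sum>q\<in>N0. above_weight b s lam p (fst q) (snd q)) \<le> 1"
proof -
  let ?D = "real (n_above b s lam p)"
  have fin: "finite N0" using N0 by (rule finite_subset) simp
  have "above_weight b s lam p i j \<le> (if lam < p i j then 1 / ?D else 0)" if "(i,j) \<in> N0" for i j
  proof (cases "lam < p i j")
    case True
    have ij: "(i,j) \<in> {(k,j) \<in> idx b s. lam < p k j}" using that N0 True by auto
    then have "card {(i,j)} \<le> n_above b s lam p"
      unfolding n_above_def by (intro card_mono) auto
    then have "1 \<le> n_above b s lam p" by simp
    moreover have "n_above b s lam p \<le> n_above_off_row b s lam p i + smax b s"
      using ij by (intro n_above_le_off_row) (auto simp: idx_def)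
    ultimately show ?thesis using True by (auto simp: above_weight_def intro!: divide_left_mono)
  qed (simp add: above_weight_def)
  then have "(\<Sum>q\<in>N0. above_weight b s lam p (fst q) (snd q))
      \<le> (\<Sum>q\<in>N0. if lam < p (fst q) (snd q) then 1 / ?D else 0)"
    by (intro sum_mono) auto
  also have "\<dots> = real (card {q \<in> N0. lam < p (fst q) (snd q)}) / ?D"
    using fin by (simp add: sum.If_cases Int_def)
  also have "\<dots> \<le> 1"
  proof -
    have "{q \<in> N0. lam < p (fst q) (snd q)} \<subseteq> {(k,j) \<in> idx b s. lam < p k j}" using N0 by auto
    then have "card {q \<in> N0. lam < p (fst q) (snd q)} \<le> n_above b s lam p"
      unfolding n_above_def by (intro card_mono) auto
    then show ?thesis by (cases "n_above b s lam p = 0") auto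
  qed
  finally show ?thesis .
qed

section \<open>Measurability\<close>

lemma card_filter_eq_sum: "finite A \<Longrightarrow> real (card {q\<in>A. P q}) = (\<Sum>q\<in>A. if P q then 1 else 0)"
  by (simp add: sum.If_cases Int_def conj_commute)

context
  fixes N :: "'a measure" and f :: "'a \<Rightarrow> nat \<Rightarrow> nat \<Rightarrow> real"
  assumes f_meas: "\<And>k j. k < b \<Longrightarrow> j < s k \<Longrightarrow> (\<lambda>x. f x k j) \<in> borel_measurable N"
begin

lemma measurable_card_idx_filter:
  assumes Q: "\<And>k j. (k,j) \<in> idx b s \<Longrightarrow> Measurable.pred N (\<lambda>x. Q k j (f x k j))"
  shows "(\<lambda>x. real (card {(k,j)\<in>idx b s. Q k j (f x k j)})) \<in> borel_measurable N"
proof -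
  have "{(k,j)\<in>idx b s. Q k j (f x k j)} = {q\<in>idx b s. Q (fst q) (snd q) (f x (fst q) (snd q))}"
    for x by auto
  then have card_eq: "real (card {(k,j)\<in>idx b s. Q k j (f x k j)})
      = (\<Sum>q\<in>idx b s. if Q (fst q) (snd q) (f x (fst q) (snd q)) then 1 else 0)" for x
    using card_filter_eq_sum[OF finite_idx] by simp
  show ?thesis
    unfolding card_eq
  proof (rule borel_measurable_sum)
    fix q assume "q \<in> idx b s"
    then have [measurable]: "Measurable.pred N (\<lambda>x. Q (fst q) (snd q) (f x (fst q) (snd q)))"
      using Q[of "fst q" "snd q"] by simp
    show "(\<lambda>x. if Q (fst q) (snd q) (f x (fst q) (snd q)) then 1 else 0 :: real) \<in> borel_measurable N"
      by measurable
  qed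
qed

lemma f_meas_idx: "(k,j) \<in> idx b s \<Longrightarrow> (\<lambda>x. f x k j) \<in> borel_measurable N"
  using f_meas by (auto simp: idx_def)

lemma measurable_n_above: "(\<lambda>x. real (n_above b s lam (f x))) \<in> borel_measurable N"
  unfolding n_above_def
  by (rule measurable_card_idx_filter[where Q="\<lambda>k j v. lam < v"]) (use f_meas_idx in measurable)

lemma measurable_n_above_off_row: "(\<lambda>x. real (n_above_off_row b s lam (f x) i)) \<in> borel_measurable N"
  unfolding n_above_off_row_def
  by (rule measurable_card_idx_filter[where Q="\<lambda>k j v. k \<noteq> i \<and> lam < v"])
     (use f_meas_idx in measurable)

lemma measurable_pi0hat: "lam < 1 \<Longrightarrow> (\<lambda>x. pi0hat b s lam (f x)) \<in> borel_measurable N"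
  unfolding pi0hat_eq using measurable_n_above by measurable

lemma measurable_Ptil: "i < b \<Longrightarrow> (\<lambda>x. Ptil b s (f x) i) \<in> borel_measurable N"
proof -
  assume i: "i < b"
  have "{f x i j | j. j < s i} = (\<lambda>j. f x i j) ` {..<s i}" for x by auto
  moreover have "(\<lambda>x. Min ((\<lambda>j. f x i j) ` {..<s i})) \<in> borel_measurable N"
    by (rule borel_measurable_Min) (use f_meas i in auto)
  ultimately show ?thesis unfolding Ptil_def by simp
qed

lemma pred_mem_Bset: "lam < 1 \<Longrightarrow> Measurable.pred N (\<lambda>x. m \<in> Bset b s alpha lam (f x))"
proof -
  assume lam: "lam < 1"
  let ?thr = "\<lambda>x. real m * alpha / real b / pi0hat b s lam (f x)"
  have "m \<in> Bset b s alpha lam (f x) \<longleftrightarrow> 1 \<le> m \<and> m \<le> b \<and>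
      real m \<le> (\<Sum>i<b. if Ptil b s (f x) i \<le> ?thr x then 1 else 0)" for x
  proof -
    have "real (card {i. i < b \<and> Ptil b s (f x) i \<le> ?thr x})
        = real (card {i\<in>{..<b}. Ptil b s (f x) i \<le> ?thr x})"
      by (simp add: lessThan_def)
    also have "\<dots> = (\<Sum>i<b. if Ptil b s (f x) i \<le> ?thr x then 1 else 0)"
      by (rule card_filter_eq_sum) simp
    finally show ?thesis unfolding mem_Bset_iff_card[OF lam] by linarith
  qed
  moreover note measurable_pi0hat[OF lam, measurable] measurable_Ptil[measurable]
  ultimately show ?thesis by simp
qed

lemma measurable_bstar: "lam < 1 \<Longrightarrow> (\<lambda>x. bstar b s alpha lam (f x)) \<in> measurable N (count_space UNIV)"
proof -
  assume lam: "lam < 1"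
  note pred_mem_Bset[OF lam, measurable]
  have "Measurable.pred N (\<lambda>x. bstar b s alpha lam (f x) = a)" for a
    unfolding bstar_eq_iff by measurable
  then have "{x\<in>space N. bstar b s alpha lam (f x) = a} \<in> sets N" for a by (rule predE)
  then show ?thesis
    unfolding measurable_count_space_eq2_countable by (auto simp: vimage_def Int_def conj_commute)
qed

lemma measurable_fdp_term:
  "lam < 1 \<Longrightarrow> (i,j) \<in> idx b s \<Longrightarrow> (\<lambda>x. fdp_term b s alpha lam (f x) i j) \<in> borel_measurable N"
  using measurable_bstar measurable_n_above_off_row f_meas_idx
  unfolding fdp_term_def row_level_def by measurable

lemma measurable_above_weight:
  "(i,j) \<in> idx b s \<Longrightarrow> (\<lambda>x. above_weight b s lam (f x) i j) \<in> borel_measurable N"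
  using measurable_n_above_off_row f_meas_idx unfolding above_weight_def by measurable

end

end

section \<open>The step-up sum under positive dependence\<close>

context
  fixes M :: "'a measure" and t :: "'a \<Rightarrow> real" and K :: "'a \<Rightarrow> nat" and c :: real
  assumes prob: "prob_space M"
    and t_meas: "t \<in> borel_measurable M"
    and K_meas: "K \<in> measurable M (count_space UNIV)"
    and t_unif: "\<And>u. 0 \<le> u \<Longrightarrow> u \<le> 1 \<Longrightarrow> measure M {\<omega>\<in>space M. t \<omega> \<le> u} = u"
    and ratio_mono: "\<And>m u v. 0 < u \<Longrightarrow> u \<le> v \<Longrightarrow> v < 1 \<Longrightarrow>
        measure M {\<omega>\<in>space M. K \<omega> \<le> m \<and> t \<omega> \<le> u} / u
        \<le> measure M {\<omega>\<in>space M. K \<omega> \<le> m \<and> t \<omega> \<le> v} / v"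
    and c_pos: "0 < c"
begin

interpretation prob_space M by (rule prob)

text \<open>Dividing by P(t \<le> u) = min u 1 instead of u keeps the ratio monotone for u \<ge> 1 as well.\<close>

definition cond_ratio :: "nat \<Rightarrow> real \<Rightarrow> real" where
  "cond_ratio m u = measure M {\<omega>\<in>space M. K \<omega> \<le> m \<and> t \<omega> \<le> u} / min u 1"

lemma sets_t_le [simp]: "{\<omega>\<in>space M. t \<omega> \<le> u} \<in> sets M"
  using t_meas by measurable

lemma sets_K_le [simp]: "{\<omega>\<in>space M. K \<omega> \<le> m} \<in> sets M"
  using K_meas by measurable

lemma sets_K_t_le [simp]: "{\<omega>\<in>space M. K \<omega> \<le> m \<and> t \<omega> \<le> u} \<in> sets M"
  using K_meas t_meas by measurable

lemma measure_t_le: "0 \<le> u \<Longrightarrow> measure M {\<omega>\<in>space M. t \<omega> \<le> u} = min u 1"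
proof (cases "u \<le> 1")
  case False
  have "measure M {\<omega>\<in>space M. t \<omega> \<le> 1} \<le> measure M {\<omega>\<in>space M. t \<omega> \<le> u}"
    using False by (intro finite_measure_mono) auto
  then show ?thesis using False t_unif[of 1] prob_le_1[of "{\<omega>\<in>space M. t \<omega> \<le> u}"] by simp
qed (simp add: t_unif)

lemma measure_K_t_le_ge_1:
  assumes "1 \<le> v"
  shows "measure M {\<omega>\<in>space M. K \<omega> \<le> m \<and> t \<omega> \<le> v} = measure M {\<omega>\<in>space M. K \<omega> \<le> m}"
proof -
  have "measure M {\<omega>\<in>space M. t \<omega> \<le> v} = 1" using measure_t_le[of v] assms by simp
  then have "AE \<omega> in M. \<omega> \<in> {\<omega>\<in>space M. t \<omega> \<le> v}" by (rule AE_prob_1)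
  then show ?thesis
    by (intro finite_measure_eq_AE) (auto elim!: AE_mp)
qed

lemma cond_ratio_mono:
  assumes u: "0 < u" and uv: "u \<le> v"
  shows "cond_ratio m u \<le> cond_ratio m v"
proof (cases "v < 1")
  case True
  then show ?thesis using ratio_mono[OF u uv True] u uv by (simp add: cond_ratio_def)
next
  case False
  let ?Km = "{\<omega>\<in>space M. K \<omega> \<le> m}"
  have v_eq: "cond_ratio m v = measure M ?Km"
    using False measure_K_t_le_ge_1[of v m] by (simp add: cond_ratio_def)
  show ?thesis
  proof (cases "u < 1")
    case False
    then show ?thesis using v_eq measure_K_t_le_ge_1[of u m] by (simp add: cond_ratio_def)
  next
    case True
    have "w * (measure M {\<omega>\<in>space M. K \<omega> \<le> m \<and> t \<omega> \<le> u} / u) \<le> measure M ?Km"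
      if w: "0 < w" "w < 1" for w
    proof (cases "u \<le> w")
      case True
      have "measure M {\<omega>\<in>space M. K \<omega> \<le> m \<and> t \<omega> \<le> u} / u
          \<le> measure M {\<omega>\<in>space M. K \<omega> \<le> m \<and> t \<omega> \<le> w} / w"
        using ratio_mono[OF u True w(2)] .
      also have "\<dots> \<le> measure M ?Km / w"
        using w by (intro divide_right_mono finite_measure_mono) auto
      finally show ?thesis using w by (simp add: field_simps)
    next
      case False
      have "w * (measure M {\<omega>\<in>space M. K \<omega> \<le> m \<and> t \<omega> \<le> u} / u)
          \<le> measure M {\<omega>\<in>space M. K \<omega> \<le> m \<and> t \<omega> \<le> u}"
        using False u by (simp add: field_simps mult_right_mono)
      also have "\<dots> \<le> measure M ?Km"
        by (intro finite_measure_mono) auto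
      finally show ?thesis .
    qed
    then have "measure M {\<omega>\<in>space M. K \<omega> \<le> m \<and> t \<omega> \<le> u} / u \<le> measure M ?Km"
      by (rule field_le_mult_one_interval)
    then show ?thesis using v_eq True by (simp add: cond_ratio_def)
  qed
qed

lemma cond_ratio_le_1: "0 < u \<Longrightarrow> cond_ratio m u \<le> 1"
proof -
  assume u: "0 < u"
  have "measure M {\<omega>\<in>space M. K \<omega> \<le> m \<and> t \<omega> \<le> u} \<le> measure M {\<omega>\<in>space M. t \<omega> \<le> u}"
    by (intro finite_measure_mono) auto
  then show ?thesis using measure_t_le[of u] u by (simp add: cond_ratio_def)
qed

lemma measure_K_eq_le_increment:
  assumes k: "1 \<le> k"
  shows "measure M {\<omega>\<in>space M. K \<omega> = k \<and> t \<omega> \<le> c * k} / real k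
      \<le> c * (cond_ratio k (c * k) - cond_ratio (k - 1) (c * k))"
proof -
  let ?A = "\<lambda>m. {\<omega>\<in>space M. K \<omega> \<le> m \<and> t \<omega> \<le> c * k}"
  have ck: "0 < min (c * k) 1" using c_pos k by simp
  have sub: "?A (k - 1) \<subseteq> ?A k" by auto
  have "{\<omega>\<in>space M. K \<omega> = k \<and> t \<omega> \<le> c * k} = ?A k - ?A (k - 1)" using k by auto
  then have "measure M {\<omega>\<in>space M. K \<omega> = k \<and> t \<omega> \<le> c * k}
      = measure M (?A k) - measure M (?A (k - 1))"
    using sub by (simp add: finite_measure_Diff)
  also have "\<dots> = min (c * k) 1 * (cond_ratio k (c * k) - cond_ratio (k - 1) (c * k))"
    using ck by (simp add: cond_ratio_def field_simps del: min_less_iff_conj)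
  finally have "measure M {\<omega>\<in>space M. K \<omega> = k \<and> t \<omega> \<le> c * k} / real k
      = min (c * k) 1 / real k * (cond_ratio k (c * k) - cond_ratio (k - 1) (c * k))"
    by simp
  also have "\<dots> \<le> c * (cond_ratio k (c * k) - cond_ratio (k - 1) (c * k))"
  proof (rule mult_right_mono)
    show "min (c * k) 1 / real k \<le> c" using k c_pos by (simp add: divide_le_eq)
    show "0 \<le> cond_ratio k (c * k) - cond_ratio (k - 1) (c * k)"
      using finite_measure_mono[OF sub] ck by (simp add: cond_ratio_def divide_right_mono)
  qed
  finally show ?thesis .
qed

lemma step_up_sum_le:
  "(\<Sum>k\<in>{1..n}. measure M {\<omega>\<in>space M. K \<omega> = k \<and> t \<omega> \<le> c * k} / real k) \<le> c"
proof -
  have telescope: "(\<Sum>k\<in>{1..n}. measure M {\<omega>\<in>space M. K \<omega> = k \<and> t \<omega> \<le> c * k} / real k)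
      \<le> c * cond_ratio n (c * n)" for n
  proof (induction n)
    case 0
    then show ?case using c_pos by (simp add: cond_ratio_def)
  next
    case (Suc n)
    have "c * cond_ratio n (c * n) \<le> c * cond_ratio n (c * Suc n)"
    proof (cases "n = 0")
      case True
      then show ?thesis using c_pos by (simp add: cond_ratio_def)
    next
      case False
      then show ?thesis using c_pos by (intro mult_left_mono cond_ratio_mono) auto
    qed
    then show ?case
      using Suc.IH measure_K_eq_le_increment[of "Suc n"] by (simp add: algebra_simps)
  qed
  show ?thesis
  proof (cases "n = 0")
    case False
    then have "c * cond_ratio n (c * n) \<le> c * 1"
      using cond_ratio_le_1[of "c * n" n] c_pos by (intro mult_left_mono) auto
    then show ?thesis using telescope[of n] by simp
  qed (simp add: c_pos less_imp_le)
qed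

end

section \<open>Expected FDP\<close>

lemma integrable_bounded_cong_sets:
  assumes "prob_space N" "sets N = sets N'"
    and "g \<in> borel_measurable N'" "\<And>z. \<bar>g z\<bar> \<le> (B::real)"
  shows "integrable N g"
proof -
  interpret prob_space N by fact
  show ?thesis
    using assms(3,4) measurable_cong_sets[OF assms(2) refl] by (intro integrable_const_bound AE_I2) auto
qed

context
  fixes M :: "'w measure" and P :: "'w \<Rightarrow> nat \<Rightarrow> nat \<Rightarrow> real"
    and b :: nat and s :: "nat \<Rightarrow> nat" and N0 :: "(nat \<times> nat) set"
    and alpha lam :: real
  assumes prob: "prob_space M"
    and b_pos: "b \<ge> 1"
    and s_pos: "\<forall>i<b. s i \<ge> 1"
    and meas: "\<forall>i<b. \<forall>j<s i. (\<lambda>\<omega>. P \<omega> i j) \<in> borel_measurable M"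
    and N0_sub: "N0 \<subseteq> idx b s"
    and unif: "\<forall>(i,j)\<in>N0. \<forall>u\<in>{0..1}.
                 measure M {\<omega>\<in>space M. P \<omega> i j \<le> u} = u"
    and posdep: "\<forall>(i,j)\<in>N0. \<forall>\<phi> :: (nat \<Rightarrow> real) \<Rightarrow> real.
        (\<phi> \<in> borel_measurable (PiM {..<s i} (\<lambda>_. borel))
         \<and> (\<forall>x y. (\<forall>k<s i. x k \<le> y k) \<longrightarrow> \<phi> x \<le> \<phi> y)
         \<and> integrable M (\<lambda>\<omega>. \<phi> (row s P i \<omega>)))
        \<longrightarrow> (\<forall>u v. 0 < u \<and> u \<le> v \<and> v < 1 \<longrightarrow>
              (\<integral>\<omega>. \<phi> (row s P i \<omega>) * indicator {\<omega>\<in>space M. P \<omega> i j \<le> u} \<omega> \<partial>M)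
                / measure M {\<omega>\<in>space M. P \<omega> i j \<le> u}
              \<le> (\<integral>\<omega>. \<phi> (row s P i \<omega>) * indicator {\<omega>\<in>space M. P \<omega> i j \<le> v} \<omega> \<partial>M)
                / measure M {\<omega>\<in>space M. P \<omega> i j \<le> v})"
    and alpha: "0 < alpha"
    and lam: "0 \<le> lam" "lam < 1"
begin

interpretation prob_space M by (rule prob)

abbreviation row_space :: "nat \<Rightarrow> (nat \<Rightarrow> real) measure" where
  "row_space k \<equiv> PiM {..<s k} (\<lambda>_. borel)"

lemma row_nth: "j < s i \<Longrightarrow> row s P i \<omega> j = P \<omega> i j"
  by (simp add: row_def)

lemma measurable_row: "k < b \<Longrightarrow> row s P k \<in> measurable M (row_space k)"
  unfolding row_def using meas by (intro measurable_restrict) auto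

lemma measurable_upd_row_space:
  "k < b \<Longrightarrow> j < s k \<Longrightarrow> (\<lambda>z. (x(i := z)) k j) \<in> borel_measurable (row_space i)"
  by (cases "k = i") auto

lemma measurable_upd_row:
  "k < b \<Longrightarrow> j < s k \<Longrightarrow> (\<lambda>\<omega>. (x(i := row s P i \<omega>)) k j) \<in> borel_measurable M"
  using meas by (cases "k = i") (auto simp: row_nth)

text \<open>Positive dependence applies because, with the other rows x fixed, B* \<le> m is an increasing event
  in row i.\<close>

lemma ratio_mono_upd_row:
  assumes ij: "(i,j) \<in> N0" and uv: "0 < u" "u \<le> v" "v < 1"
  shows "measure M {\<omega>\<in>space M. bstar b s alpha lam (x(i := row s P i \<omega>)) \<le> m \<and> P \<omega> i j \<le> u} / u
       \<le> measure M {\<omega>\<in>space M. bstar b s alpha lam (x(i := row s P i \<omega>)) \<le> m \<and> P \<omega> i j \<le> v} / v"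
proof -
  have i: "i < b" and j: "j < s i" using ij N0_sub by (auto simp: idx_def)
  define \<phi> where "\<phi> z = (if bstar b s alpha lam (x(i := z)) \<le> m then 1 else 0 :: real)" for z
  have bstar_meas [measurable]:
    "(\<lambda>z. bstar b s alpha lam (x(i := z))) \<in> measurable (row_space i) (count_space UNIV)"
    using measurable_bstar[where N="row_space i" and f="\<lambda>z. x(i := z)",
        OF b_pos s_pos measurable_upd_row_space lam(2)] by simp
  have \<phi>_meas: "\<phi> \<in> borel_measurable (row_space i)" unfolding \<phi>_def by measurable
  have "\<phi> z \<le> \<phi> z'" if "\<forall>k<s i. z k \<le> z' k" for z z'
  proof -
    have "\<forall>(k,j')\<in>idx b s. (x(i := z)) k j' \<le> (x(i := z')) k j'" using that by (auto simp: idx_def)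
    then have "bstar b s alpha lam (x(i := z')) \<le> bstar b s alpha lam (x(i := z))"
      by (rule bstar_antimono[OF b_pos s_pos lam(2) less_imp_le[OF alpha]])
    then show ?thesis by (simp add: \<phi>_def)
  qed
  moreover have "integrable M (\<lambda>\<omega>. \<phi> (row s P i \<omega>))"
    using measurable_compose[OF measurable_row[OF i] \<phi>_meas]
    by (intro integrable_const_bound[where B=1]) (auto simp: \<phi>_def)
  ultimately have ratio:
    "(\<integral>\<omega>. \<phi> (row s P i \<omega>) * indicator {\<omega>\<in>space M. P \<omega> i j \<le> u} \<omega> \<partial>M)
        / measure M {\<omega>\<in>space M. P \<omega> i j \<le> u}
     \<le> (\<integral>\<omega>. \<phi> (row s P i \<omega>) * indicator {\<omega>\<in>space M. P \<omega> i j \<le> v} \<omega> \<partial>M)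
        / measure M {\<omega>\<in>space M. P \<omega> i j \<le> v}"
    using posdep ij \<phi>_meas uv by blast
  have "(\<integral>\<omega>. \<phi> (row s P i \<omega>) * indicator {\<omega>\<in>space M. P \<omega> i j \<le> w} \<omega> \<partial>M)
      = measure M {\<omega>\<in>space M. bstar b s alpha lam (x(i := row s P i \<omega>)) \<le> m \<and> P \<omega> i j \<le> w}" for w
  proof -
    have [measurable]: "(\<lambda>\<omega>. P \<omega> i j) \<in> borel_measurable M" using meas i j by simp
    have [measurable]: "(\<lambda>\<omega>. bstar b s alpha lam (x(i := row s P i \<omega>))) \<in> measurable M (count_space UNIV)"
      using measurable_compose[OF measurable_row[OF i] bstar_meas] by simp
    have "(\<integral>\<omega>. \<phi> (row s P i \<omega>) * indicator {\<omega>\<in>space M. P \<omega> i j \<le> w} \<omega> \<partial>M)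
        = (\<integral>\<omega>. indicator {\<omega>\<in>space M. bstar b s alpha lam (x(i := row s P i \<omega>)) \<le> m
                                 \<and> P \<omega> i j \<le> w} \<omega> \<partial>M)"
      by (intro Bochner_Integration.integral_cong) (auto simp: \<phi>_def indicator_def)
    moreover have "{\<omega>\<in>space M. bstar b s alpha lam (x(i := row s P i \<omega>)) \<le> m \<and> P \<omega> i j \<le> w}
        \<in> sets M" by measurable
    ultimately show ?thesis by simp
  qed
  moreover have "measure M {\<omega>\<in>space M. P \<omega> i j \<le> w} = w" if "0 \<le> w" "w \<le> 1" for w
    using unif ij that by auto
  ultimately show ?thesis using ratio uv by simp
qed

lemma integral_fdp_term_upd_row_le:
  assumes ij: "(i,j) \<in> N0"
  shows "(\<integral>\<omega>. fdp_term b s alpha lam (x(i := row s P i \<omega>)) i j \<partial>M) \<le> row_level b s alpha lam x i"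
proof -
  have ij_idx: "(i,j) \<in> idx b s" using ij N0_sub by auto
  then have i: "i < b" and j: "j < s i" by (auto simp: idx_def)
  define K where "K \<omega> = bstar b s alpha lam (x(i := row s P i \<omega>))" for \<omega>
  define c where "c = row_level b s alpha lam x i"
  have c_pos: "0 < c"
    using alpha lam smax_pos[OF b_pos s_pos] by (simp add: c_def row_level_def add_nonneg_pos)
  have [measurable]: "K \<in> measurable M (count_space UNIV)"
    unfolding K_def using measurable_bstar[where N=M and f="\<lambda>\<omega>. x(i := row s P i \<omega>)",
        OF b_pos s_pos measurable_upd_row lam(2)] .
  have [measurable]: "(\<lambda>\<omega>. P \<omega> i j) \<in> borel_measurable M" using meas i j by simp
  have "fdp_term b s alpha lam (x(i := row s P i \<omega>)) i j
      = (\<Sum>k\<in>{1..b}. indicator {\<omega>\<in>space M. K \<omega> = k \<and> P \<omega> i j \<le> c * k} \<omega> / real k)"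
    if "\<omega> \<in> space M" for \<omega>
    using that j by (auto simp: fdp_term_def K_def c_def row_nth indicator_def intro!: sum.cong)
  then have "(\<integral>\<omega>. fdp_term b s alpha lam (x(i := row s P i \<omega>)) i j \<partial>M)
      = (\<Sum>k\<in>{1..b}. measure M {\<omega>\<in>space M. K \<omega> = k \<and> P \<omega> i j \<le> c * k} / real k)"
    by (simp add: Bochner_Integration.integral_cong[OF refl] Bochner_Integration.integral_sum
        integrable_real_indicator less_top[symmetric])
  also have "\<dots> \<le> c"
    using ratio_mono_upd_row[OF ij] unif ij c_pos
    by (intro step_up_sum_le[OF prob, where K=K]) (auto simp: K_def)
  finally show ?thesis unfolding c_def .
qed

lemma integral_above_weight_upd_row:
  assumes ij: "(i,j) \<in> N0"
  shows "(\<integral>\<omega>. above_weight b s lam (x(i := row s P i \<omega>)) i j \<partial>M)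
       = (1 - lam) / (real (n_above_off_row b s lam x i) + real (smax b s))"
proof -
  have i: "i < b" and j: "j < s i" using ij N0_sub by (auto simp: idx_def)
  have [measurable]: "(\<lambda>\<omega>. P \<omega> i j) \<in> borel_measurable M" using meas i j by simp
  have "measure M {\<omega>\<in>space M. lam < P \<omega> i j} = 1 - lam"
  proof -
    have "{\<omega>\<in>space M. lam < P \<omega> i j} = space M - {\<omega>\<in>space M. P \<omega> i j \<le> lam}" by auto
    moreover have "measure M {\<omega>\<in>space M. P \<omega> i j \<le> lam} = lam" using unif ij lam by auto
    ultimately show ?thesis by (simp add: prob_compl)
  qed
  moreover have "(\<integral>\<omega>. above_weight b s lam (x(i := row s P i \<omega>)) i j \<partial>M)
      = (\<integral>\<omega>. indicator {\<omega>\<in>space M. lam < P \<omega> i j} \<omega>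
             / (real (n_above_off_row b s lam x i) + real (smax b s)) \<partial>M)"
    using j by (intro Bochner_Integration.integral_cong) (auto simp: above_weight_def row_nth indicator_def)
  ultimately show ?thesis by simp
qed

text \<open>Indices k \<ge> b get a dummy copy of row 0 so that every factor is a probability space.\<close>

definition row_distr :: "nat \<Rightarrow> (nat \<Rightarrow> real) measure" where
  "row_distr k = (if k < b then distr M (row_space k) (row s P k) else distr M (row_space 0) (row s P 0))"

lemma prob_space_row_distr: "prob_space (row_distr k)"
  unfolding row_distr_def using measurable_row b_pos by (auto intro!: prob_space_distr)

lemma sets_row_distr: "k < b \<Longrightarrow> sets (row_distr k) = sets (row_space k)"
  by (simp add: row_distr_def)

interpretation rows: product_sigma_finite row_distr
  by (intro product_sigma_finite.intro prob_space_imp_sigma_finite prob_space_row_distr)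

lemma prob_space_PiM_row_distr: "prob_space (PiM {..<b} row_distr)"
  by (intro prob_space_PiM prob_space_row_distr)

lemma sets_PiM_row_distr: "sets (PiM {..<b} row_distr) = sets (PiM {..<b} row_space)"
  by (rule sets_PiM_cong) (auto simp: sets_row_distr)

lemma measurable_PiM_row_space_nth:
  assumes "k < b" "j < s k"
  shows "(\<lambda>y. y k j) \<in> borel_measurable (PiM {..<b} row_space)"
proof -
  have "(\<lambda>y. y k) \<in> measurable (PiM {..<b} row_space) (row_space k)"
    using assms(1) by (intro measurable_component_singleton) auto
  moreover have "(\<lambda>z. z j) \<in> borel_measurable (row_space k)" using assms(2) by simp
  ultimately show ?thesis by (rule measurable_compose)
qed

lemma measurable_fdp_term_PiM: "(i,j) \<in> idx b s \<Longrightarrow>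
    (\<lambda>y. fdp_term b s alpha lam y i j) \<in> borel_measurable (PiM {..<b} row_space)"
  using measurable_fdp_term[where f="\<lambda>y. y", OF b_pos s_pos measurable_PiM_row_space_nth lam(2)] .

lemma measurable_above_weight_PiM: "(i,j) \<in> idx b s \<Longrightarrow>
    (\<lambda>y. above_weight b s lam y i j) \<in> borel_measurable (PiM {..<b} row_space)"
  using measurable_above_weight[where f="\<lambda>y. y", OF b_pos s_pos measurable_PiM_row_space_nth] .

lemma integrable_fdp_term_PiM: "(i,j) \<in> idx b s \<Longrightarrow>
    integrable (PiM {..<b} row_distr) (\<lambda>y. fdp_term b s alpha lam y i j)"
  by (rule integrable_bounded_cong_sets[OF prob_space_PiM_row_distr sets_PiM_row_distr
        measurable_fdp_term_PiM abs_fdp_term_le])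

lemma integrable_above_weight_PiM: "(i,j) \<in> idx b s \<Longrightarrow>
    integrable (PiM {..<b} row_distr) (\<lambda>y. above_weight b s lam y i j)"
  by (rule integrable_bounded_cong_sets[OF prob_space_PiM_row_distr sets_PiM_row_distr
        measurable_above_weight_PiM abs_above_weight_le[OF b_pos s_pos]])

lemma measurable_fdp_term_upd: "(i,j) \<in> idx b s \<Longrightarrow>
    (\<lambda>z. fdp_term b s alpha lam (x(i := z)) i j) \<in> borel_measurable (row_space i)"
  using measurable_fdp_term[where N="row_space i" and f="\<lambda>z. x(i := z)",
      OF b_pos s_pos measurable_upd_row_space lam(2)] by simp

lemma measurable_above_weight_upd: "(i,j) \<in> idx b s \<Longrightarrow>
    (\<lambda>z. above_weight b s lam (x(i := z)) i j) \<in> borel_measurable (row_space i)"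
  using measurable_above_weight[where N="row_space i" and f="\<lambda>z. x(i := z)",
      OF b_pos s_pos measurable_upd_row_space] by simp

lemma integrable_row_distr_fdp_term: "(i,j) \<in> idx b s \<Longrightarrow>
    integrable (row_distr i) (\<lambda>z. fdp_term b s alpha lam (x(i := z)) i j)"
  by (rule integrable_bounded_cong_sets[OF prob_space_row_distr sets_row_distr
        measurable_fdp_term_upd abs_fdp_term_le]) (auto simp: idx_def)

lemma integrable_row_distr_above_weight: "(i,j) \<in> idx b s \<Longrightarrow>
    integrable (row_distr i) (\<lambda>z. above_weight b s lam (x(i := z)) i j)"
  by (rule integrable_bounded_cong_sets[OF prob_space_row_distr sets_row_distr
        measurable_above_weight_upd abs_above_weight_le[OF b_pos s_pos]]) (auto simp: idx_def)

lemma integral_row_distr_fdp_term_le: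
  assumes ij: "(i,j) \<in> N0"
  shows "(\<integral>z. fdp_term b s alpha lam (x(i := z)) i j \<partial>row_distr i)
       \<le> alpha * (\<integral>z. above_weight b s lam (x(i := z)) i j \<partial>row_distr i)"
proof -
  have ij_idx: "(i,j) \<in> idx b s" using ij N0_sub by auto
  then have i: "i < b" by (simp add: idx_def)
  have "row_level b s alpha lam x i
      = alpha * ((1 - lam) / (real (n_above_off_row b s lam x i) + real (smax b s)))"
    by (simp add: row_level_def)
  then show ?thesis
    unfolding row_distr_def if_P[OF i]
      integral_distr[OF measurable_row[OF i] measurable_fdp_term_upd[OF ij_idx]]
      integral_distr[OF measurable_row[OF i] measurable_above_weight_upd[OF ij_idx]]
      integral_above_weight_upd_row[OF ij]
    using integral_fdp_term_upd_row_le[OF ij, of x] by linarith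
qed

lemma integral_fdp_term_PiM_le:
  assumes ij: "(i,j) \<in> N0"
  shows "(\<integral>y. fdp_term b s alpha lam y i j \<partial>PiM {..<b} row_distr)
       \<le> alpha * (\<integral>y. above_weight b s lam y i j \<partial>PiM {..<b} row_distr)"
proof -
  have ij_idx: "(i,j) \<in> idx b s" using ij N0_sub by auto
  then have i: "i < b" by (auto simp: idx_def)
  define h where "h y = fdp_term b s alpha lam y i j - alpha * above_weight b s lam y i j" for y
  define I where "I = {..<b} - {i}"
  have I: "insert i I = {..<b}" "finite I" "i \<notin> I" using i by (auto simp: I_def)
  have "(\<integral>z. h (x(i := z)) \<partial>row_distr i) \<le> 0" for x
    using integral_row_distr_fdp_term_le[OF ij, of x]
      integrable_row_distr_fdp_term[OF ij_idx] integrable_row_distr_above_weight[OF ij_idx]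
    by (simp add: h_def)
  then have "0 \<le> (\<integral>x. - (\<integral>z. h (x(i := z)) \<partial>row_distr i) \<partial>PiM I row_distr)"
    by (intro integral_nonneg_AE AE_I2) simp
  then have inner_le: "(\<integral>x. (\<integral>z. h (x(i := z)) \<partial>row_distr i) \<partial>PiM I row_distr) \<le> 0"
    by (simp only: Bochner_Integration.integral_minus neg_0_le_iff_le)
  have Fubini: "(\<integral>y. h y \<partial>PiM {..<b} row_distr)
      = (\<integral>x. (\<integral>z. h (x(i := z)) \<partial>row_distr i) \<partial>PiM I row_distr)"
    unfolding I(1)[symmetric]
  proof (rule rows.product_integral_insert[OF I(2,3)])
    show "integrable (PiM (insert i I) row_distr) h"
      unfolding I(1) h_def
      using integrable_fdp_term_PiM[OF ij_idx] integrable_above_weight_PiM[OF ij_idx] by simp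
  qed
  have "(\<integral>y. h y \<partial>PiM {..<b} row_distr)
      = (\<integral>y. fdp_term b s alpha lam y i j \<partial>PiM {..<b} row_distr)
        - alpha * (\<integral>y. above_weight b s lam y i j \<partial>PiM {..<b} row_distr)"
    unfolding h_def
    using integrable_fdp_term_PiM[OF ij_idx] integrable_above_weight_PiM[OF ij_idx] by simp
  then show ?thesis using Fubini inner_le by linarith
qed

lemma distr_rows_eq_PiM:
  assumes indep: "prob_space.indep_vars M row_space (row s P) {..<b}"
  shows "distr M (PiM {..<b} row_space) (\<lambda>\<omega>. \<lambda>k\<in>{..<b}. row s P k \<omega>) = PiM {..<b} row_distr"
proof -
  have "0 \<in> {..<b}" using b_pos by simp
  then have "{..<b} \<noteq> {}" by blast
  then have "distr M (PiM {..<b} row_space) (\<lambda>\<omega>. \<lambda>k\<in>{..<b}. row s P k \<omega>)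
      = PiM {..<b} (\<lambda>k. distr M (row_space k) (row s P k))"
    using indep indep_vars_iff_distr_eq_PiM'[where I="{..<b}" and M'=row_space and X="row s P"] measurable_row by simp
  also have "\<dots> = PiM {..<b} row_distr"
    by (intro PiM_cong) (auto simp: row_distr_def)
  finally show ?thesis .
qed

lemma sum_integral_fdp_term_PiM_le:
  "(\<Sum>q\<in>N0. (\<integral>y. fdp_term b s alpha lam y (fst q) (snd q) \<partial>PiM {..<b} row_distr)) \<le> alpha"
proof -
  let ?\<Omega> = "PiM {..<b} row_distr"
  let ?W = "\<lambda>y q. above_weight b s lam y (fst q) (snd q)"
  interpret Omega: prob_space ?\<Omega> by (rule prob_space_PiM_row_distr)
  have N0_idx: "q \<in> N0 \<Longrightarrow> (fst q, snd q) \<in> idx b s" for q using N0_sub by auto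
  have "(\<Sum>q\<in>N0. (\<integral>y. fdp_term b s alpha lam y (fst q) (snd q) \<partial>?\<Omega>))
      \<le> (\<Sum>q\<in>N0. alpha * (\<integral>y. ?W y q \<partial>?\<Omega>))"
    using integral_fdp_term_PiM_le by (intro sum_mono) auto
  also have "\<dots> = alpha * (\<integral>y. (\<Sum>q\<in>N0. ?W y q) \<partial>?\<Omega>)"
    using integrable_above_weight_PiM[OF N0_idx]
    by (simp add: Bochner_Integration.integral_sum sum_distrib_left)
  also have "\<dots> \<le> alpha * (\<integral>y. 1 \<partial>?\<Omega>)"
    using integrable_above_weight_PiM[OF N0_idx] sum_above_weight_le_1[OF b_pos s_pos N0_sub] alpha
    by (intro mult_left_mono Bochner_Integration.integral_mono Bochner_Integration.integrable_sum)
       auto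
  finally show ?thesis using Omega.prob_space by simp
qed

lemma fdp_le_sum_fdp_term_rows:
  "fdp N0 (rejections b s alpha lam (P \<omega>))
   \<le> (\<Sum>q\<in>N0. fdp_term b s alpha lam (\<lambda>k\<in>{..<b}. row s P k \<omega>) (fst q) (snd q))"
proof -
  let ?rows = "\<lambda>k\<in>{..<b}. row s P k \<omega>"
  have rows_idx: "\<forall>(k,j)\<in>idx b s. P \<omega> k j = ?rows k j"
    by (auto simp: row_nth idx_def)
  have bstar_eq: "bstar b s alpha lam ?rows = bstar b s alpha lam (P \<omega>)"
    using bstar_cong[OF b_pos s_pos lam(2) less_imp_le[OF alpha] rows_idx] .
  have "fdp_term b s alpha lam ?rows (fst q) (snd q) = fdp_term b s alpha lam (P \<omega>) (fst q) (snd q)"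
    if "q \<in> N0" for q
  proof -
    have "(fst q, snd q) \<in> idx b s" using that N0_sub by auto
    then show ?thesis by (rule fdp_term_cong[OF rows_idx _ bstar_eq])
  qed
  then show ?thesis
    using fdp_le_sum_fdp_term[OF b_pos s_pos lam(2) alpha N0_sub, of "P \<omega>"] by (simp cong: sum.cong)
qed

text \<open>Independence identifies the law of the rows with the product space, where the previous bounds
  live.\<close>

lemma expected_fdp_le:
  assumes indep: "prob_space.indep_vars M row_space (row s P) {..<b}"
  shows "(\<integral>\<omega>. fdp N0 (rejections b s alpha lam (P \<omega>)) \<partial>M) \<le> alpha"
proof (cases "integrable M (\<lambda>\<omega>. fdp N0 (rejections b s alpha lam (P \<omega>)))")
  case False
  then show ?thesis using alpha by (simp add: not_integrable_integral_eq)
next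
  case True
  define rows where "rows \<omega> = (\<lambda>k\<in>{..<b}. row s P k \<omega>)" for \<omega>
  let ?T = "\<lambda>y q. fdp_term b s alpha lam y (fst q) (snd q)"
  have N0_idx: "q \<in> N0 \<Longrightarrow> (fst q, snd q) \<in> idx b s" for q using N0_sub by auto
  have rows_meas: "rows \<in> measurable M (PiM {..<b} row_space)"
    unfolding rows_def using measurable_row by (intro measurable_restrict) auto
  have distr_rows: "distr M (PiM {..<b} row_space) rows = PiM {..<b} row_distr"
    unfolding rows_def by (rule distr_rows_eq_PiM[OF indep])
  have integrable_T: "integrable M (\<lambda>\<omega>. ?T (rows \<omega>) q)" if "q \<in> N0" for q
    using integrable_distr_eq[OF rows_meas measurable_fdp_term_PiM[OF N0_idx[OF that]]]
      integrable_fdp_term_PiM[OF N0_idx[OF that]] distr_rows by simp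
  have "(\<integral>\<omega>. fdp N0 (rejections b s alpha lam (P \<omega>)) \<partial>M) \<le> (\<integral>\<omega>. (\<Sum>q\<in>N0. ?T (rows \<omega>) q) \<partial>M)"
    using True integrable_T fdp_le_sum_fdp_term_rows unfolding rows_def[symmetric]
    by (intro Bochner_Integration.integral_mono Bochner_Integration.integrable_sum)
  also have "\<dots> = (\<Sum>q\<in>N0. (\<integral>\<omega>. ?T (rows \<omega>) q \<partial>M))"
    using integrable_T by (rule Bochner_Integration.integral_sum)
  also have "\<dots> = (\<Sum>q\<in>N0. (\<integral>y. ?T y q \<partial>PiM {..<b} row_distr))"
    using integral_distr[OF rows_meas measurable_fdp_term_PiM[OF N0_idx]] distr_rows
    by (intro sum.cong) auto
  also have "\<dots> \<le> alpha"
    by (rule sum_integral_fdp_term_PiM_le)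
  finally show ?thesis .
qed

end

theorem mainTheorem4:
  fixes M :: "'w measure" and P :: "'w \<Rightarrow> nat \<Rightarrow> nat \<Rightarrow> real"
    and b :: nat and s :: "nat \<Rightarrow> nat" and N0 :: "(nat \<times> nat) set"
    and alpha lam :: real
  assumes prob: "prob_space M"
    and b_pos: "b \<ge> 1"
    and s_pos: "\<forall>i<b. s i \<ge> 1"
    and meas: "\<forall>i<b. \<forall>j<s i. (\<lambda>\<omega>. P \<omega> i j) \<in> borel_measurable M"
    and pvals: "\<forall>\<omega>\<in>space M. \<forall>i<b. \<forall>j<s i. 0 \<le> P \<omega> i j \<and> P \<omega> i j \<le> 1"
    and N0_sub: "N0 \<subseteq> idx b s"
    and unif: "\<forall>(i,j)\<in>N0. \<forall>u\<in>{0..1}.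
                 measure M {\<omega>\<in>space M. P \<omega> i j \<le> u} = u"
    and indep: "prob_space.indep_vars M (\<lambda>i. PiM {..<s i} (\<lambda>_. borel)) (row s P) {..<b}"
    and posdep: "\<forall>(i,j)\<in>N0. \<forall>\<phi> :: (nat \<Rightarrow> real) \<Rightarrow> real.
        (\<phi> \<in> borel_measurable (PiM {..<s i} (\<lambda>_. borel))
         \<and> (\<forall>x y. (\<forall>k<s i. x k \<le> y k) \<longrightarrow> \<phi> x \<le> \<phi> y)
         \<and> integrable M (\<lambda>\<omega>. \<phi> (row s P i \<omega>)))
        \<longrightarrow> (\<forall>u v. 0 < u \<and> u \<le> v \<and> v < 1 \<longrightarrow>
              (\<integral>\<omega>. \<phi> (row s P i \<omega>) * indicator {\<omega>\<in>space M. P \<omega> i j \<le> u} \<omega> \<partial>M)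
                / measure M {\<omega>\<in>space M. P \<omega> i j \<le> u}
              \<le> (\<integral>\<omega>. \<phi> (row s P i \<omega>) * indicator {\<omega>\<in>space M. P \<omega> i j \<le> v} \<omega> \<partial>M)
                / measure M {\<omega>\<in>space M. P \<omega> i j \<le> v})"
    and alpha: "0 < alpha" "alpha < 1"
    and lam: "(2 * real b + 3) powr (- 2 / (real b + 2)) \<le> lam" "lam < 1"
  shows "(\<integral>\<omega>. fdp N0 (rejections b s alpha lam (P \<omega>)) \<partial>M) \<le> alpha"
proof -
  have "0 < (2 * real b + 3) powr (- 2 / (real b + 2))" by simp
  then have lam_nonneg: "0 \<le> lam" using lam(1) by linarith
  show ?thesis
    by (rule expected_fdp_le[OF prob b_pos s_pos meas N0_sub unif posdep alpha(1) lam_nonneg lam(2)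
          indep])
qed

end
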